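(* Let $n\ge3$ and let $U$ be a finite set with $|U|\ge n^{4n}$ and a fixed enumeration $U=\{v_1,\dots,v_{|U|}\}$. Let $V_1,\dots,V_n$ be i.i.d. random subsets of $U$, each obtained by including every element of $U$ independently with probability $\delta=\frac{1}{4n^2}$. For $t\in[n]$ let $P_t=\bigcap_{i=1}^{t-1}V_i$ (with $P_1=U$) and $S_t=\bigcap_{i=t}^n(U\setminus V_i)$, and when $P_t\ne\emptyset$ let $J_t=v_{r_t}$ with $r_t=\min\{r: v_r\in P_t\}$. Then $$\Pr\big(\text{for all }t\in[n]:\ P_t\ne\emptyset\ \text{and}\ J_t\in S_t\big)\ge\frac12.$$ *)

theory Defs
  imports "HOL-Probability.Probability"
begin

definition random_subset :: "'a set \<Rightarrow> real \<Rightarrow> 'a set pmf" where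
  "random_subset U p = map_pmf (\<lambda>f. {x \<in> U. f x}) (Pi_pmf U False (\<lambda>_. bernoulli_pmf p))"

definition iid_subsets :: "nat \<Rightarrow> 'a set \<Rightarrow> real \<Rightarrow> (nat \<Rightarrow> 'a set) pmf" where
  "iid_subsets n U p = Pi_pmf {1..n} {} (\<lambda>_. random_subset U p)"

definition Pset :: "'a set \<Rightarrow> (nat \<Rightarrow> 'a set) \<Rightarrow> nat \<Rightarrow> 'a set" where
  "Pset U V t = U \<inter> (\<Inter>i\<in>{1..<t}. V i)"

definition Sset :: "'a set \<Rightarrow> nat \<Rightarrow> (nat \<Rightarrow> 'a set) \<Rightarrow> nat \<Rightarrow> 'a set" where
  "Sset U n V t = (\<Inter>i\<in>{t..n}. U - V i)"

definition Jelem :: "'a set \<Rightarrow> (nat \<Rightarrow> 'a) \<Rightarrow> (nat \<Rightarrow> 'a set) \<Rightarrow> nat \<Rightarrow> 'a" where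
  "Jelem U v V t = v (LEAST r. r \<in> {1..card U} \<and> v r \<in> Pset U V t)"

end

theory Submission
  imports Defs
begin

text \<open>
  The event fails only if P_n is empty or J_t lies in V_i for some t \<le> i. Since J_t is determined
  by V_1, ..., V_(t-1), it is independent of V_i, so each of these at most n^2 events has
  probability at most \<delta>, and together they have probability at most n^2 \<delta> = 1/4. The elements
  of U lie in P_n independently with probability x = \<delta>^(n-1), so P_n is empty with probability
  (1 - x)^|U| \<le> 1 / (1 + |U| x) \<le> 1/4, because |U| x \<ge> 3.
\<close>

lemma Pi_pmf_Pi_pmf_conv_curry:
  assumes "finite A" "finite B"
  shows "Pi_pmf A (\<lambda>_. d) (\<lambda>a. Pi_pmf B d (q a)) =
           map_pmf curry (Pi_pmf (A \<times> B) d (\<lambda>(a, b). q a b))"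
    (is "?lhs = map_pmf curry ?prod")
proof (rule pmf_eqI)
  fix H :: "'a \<Rightarrow> 'b \<Rightarrow> 'c"
  have "inj (curry :: ('a \<times> 'b \<Rightarrow> 'c) \<Rightarrow> _)"
    by (intro injI) (metis case_prod_curry)
  then have rhs: "pmf (map_pmf curry ?prod) H = pmf ?prod (case_prod H)"
    by (metis pmf_map_inj' curry_case_prod)
  have "pmf ?lhs H = pmf ?prod (case_prod H)"
  proof (cases "\<forall>a b. (a, b) \<notin> A \<times> B \<longrightarrow> H a b = d")
    case True
    then show ?thesis
      using assms by (auto simp: pmf_Pi fun_eq_iff prod.cartesian_product intro!: prod.cong)
  next
    case False
    then obtain a b where "(a, b) \<notin> A \<times> B" "H a b \<noteq> d" by auto
    then show ?thesis
      using assms by (cases "a \<in> A") (auto simp: pmf_Pi fun_eq_iff intro!: prod_zero bexI[of _ a])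
  qed
  with rhs show "pmf ?lhs H = pmf (map_pmf curry ?prod) H" by simp
qed

lemma Pi_pmf_Pi_pmf_transpose:
  assumes "finite A" "finite B"
  shows "Pi_pmf A (\<lambda>_. d) (\<lambda>_. Pi_pmf B d (\<lambda>_. q)) =
           map_pmf (\<lambda>G a b. G b a) (Pi_pmf B (\<lambda>_. d) (\<lambda>_. Pi_pmf A d (\<lambda>_. q)))"
proof -
  have "Pi_pmf A (\<lambda>_. d) (\<lambda>_. Pi_pmf B d (\<lambda>_. q)) = map_pmf curry (Pi_pmf (A \<times> B) d (\<lambda>_. q))"
    using Pi_pmf_Pi_pmf_conv_curry[OF assms, of d "\<lambda>_ _. q"] by (simp add: case_prod_beta')
  also have "Pi_pmf (A \<times> B) d (\<lambda>_. q) = map_pmf (\<lambda>g. g \<circ> prod.swap) (Pi_pmf (B \<times> A) d (\<lambda>_. q))"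
    by (rule Pi_pmf_bij_betw) (auto simp: assms bij_betw_def)
  also have "map_pmf curry \<dots> = map_pmf (\<lambda>G a b. G b a) (map_pmf curry (Pi_pmf (B \<times> A) d (\<lambda>_. q)))"
    by (simp add: pmf.map_comp o_def curry_def)
  also have "map_pmf curry (Pi_pmf (B \<times> A) d (\<lambda>_. q)) = Pi_pmf B (\<lambda>_. d) (\<lambda>_. Pi_pmf A d (\<lambda>_. q))"
    using Pi_pmf_Pi_pmf_conv_curry[OF assms(2,1), of d "\<lambda>_ _. q"] by (simp add: case_prod_beta')
  finally show ?thesis .
qed

lemma prob_Pi_pmf_component_le:
  assumes "finite A" "x \<in> A"
    and indep: "\<And>f y. g (f(x := y)) = g f"
    and bound: "\<And>a. measure_pmf.prob (p x) {y. R a y} \<le> c"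
  shows "measure_pmf.prob (Pi_pmf A d p) {f. R (g f) (f x)} \<le> c"
proof -
  have "0 \<le> c"
    using bound measure_nonneg order_trans by blast
  have "Pi_pmf A d p = Pi_pmf (A - {x}) d p \<bind> (\<lambda>f. map_pmf (\<lambda>y. f(x := y)) (p x))"
    using Pi_pmf_insert'[of "A - {x}" x d p] assms(1,2)
    by (simp add: insert_absorb bind_commute_pmf[of "p x"] map_pmf_def)
  then have "emeasure (Pi_pmf A d p) {f. R (g f) (f x)} =
               (\<integral>\<^sup>+f. emeasure (map_pmf (\<lambda>y. f(x := y)) (p x)) {f. R (g f) (f x)} \<partial>Pi_pmf (A - {x}) d p)"
    by (simp only: emeasure_bind_pmf)
  also have "\<dots> = (\<integral>\<^sup>+f. ennreal (measure_pmf.prob (p x) {y. R (g f) y}) \<partial>Pi_pmf (A - {x}) d p)"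
    by (simp add: indep measure_pmf.emeasure_eq_measure vimage_def)
  also have "\<dots> \<le> ennreal c"
    using bound \<open>0 \<le> c\<close> by (intro measure_pmf.nn_integral_le_const) (auto intro: ennreal_leI)
  finally show ?thesis
    using \<open>0 \<le> c\<close> by (simp add: measure_pmf.emeasure_eq_measure)
qed

lemma Pi_pmf_random_subset_conv_coins:
  assumes "finite I" "finite U"
  shows "Pi_pmf I {} (\<lambda>_. random_subset U p) =
           map_pmf (\<lambda>G i. {x \<in> U. G x i})
             (Pi_pmf U (\<lambda>_. False) (\<lambda>_. Pi_pmf I False (\<lambda>_. bernoulli_pmf p)))"
proof -
  have "Pi_pmf I {} (\<lambda>_. random_subset U p) =
          map_pmf (\<lambda>h i. {x \<in> U. h i x}) (Pi_pmf I (\<lambda>_. False) (\<lambda>_. Pi_pmf U False (\<lambda>_. bernoulli_pmf p)))"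
    unfolding random_subset_def using assms
    by (subst Pi_pmf_map) (auto intro!: map_pmf_cong simp: comp_def)
  then show ?thesis
    by (simp add: Pi_pmf_Pi_pmf_transpose[OF assms] pmf.map_comp o_def)
qed

lemma prob_random_subset_mem:
  assumes "finite U" "0 \<le> p" "p \<le> 1"
  shows "measure_pmf.prob (random_subset U p) {Y. a \<in> Y} = (if a \<in> U then p else 0)"
proof -
  let ?coins = "Pi_pmf U False (\<lambda>_. bernoulli_pmf p)"
  have "measure_pmf.prob (random_subset U p) {Y. a \<in> Y} = measure_pmf.prob ?coins {f. a \<in> U \<and> f a}"
    unfolding random_subset_def measure_map_pmf by (intro arg_cong[where f="measure_pmf.prob _"]) auto
  also have "\<dots> = (if a \<in> U then measure_pmf.prob (map_pmf (\<lambda>f. f a) ?coins) {True} else 0)"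
    by (auto simp: vimage_def)
  also have "\<dots> = (if a \<in> U then p else 0)"
    using assms by (simp add: Pi_pmf_component measure_pmf_single)
  finally show ?thesis .
qed

lemma prob_random_subsets_Inter_empty:
  assumes "finite I" "finite U" "J \<subseteq> I" "0 \<le> p" "p \<le> 1"
  shows "measure_pmf.prob (Pi_pmf I {} (\<lambda>_. random_subset U p)) {V. U \<inter> (\<Inter>i\<in>J. V i) = {}} =
           (1 - p ^ card J) ^ card U"
proof -
  let ?coins = "Pi_pmf I False (\<lambda>_. bernoulli_pmf p)"
  let ?heads_on_J = "Pi I (\<lambda>i. if i \<in> J then {True} else UNIV)"
  have "measure_pmf.prob (Pi_pmf I {} (\<lambda>_. random_subset U p)) {V. U \<inter> (\<Inter>i\<in>J. V i) = {}} =
          measure_pmf.prob (Pi_pmf U (\<lambda>_. False) (\<lambda>_. ?coins)) (Pi U (\<lambda>_. - ?heads_on_J))"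
    unfolding Pi_pmf_random_subset_conv_coins[OF assms(1,2)] measure_map_pmf
    using assms(3) by (intro arg_cong[where f="measure_pmf.prob _"]) (auto simp: Pi_def set_eq_iff; blast)
  also have "\<dots> = (1 - measure_pmf.prob ?coins ?heads_on_J) ^ card U"
    using assms(2) measure_pmf.prob_compl[of ?heads_on_J ?coins]
    by (simp add: measure_Pi_pmf_Pi Compl_eq_Diff_UNIV)
  also have "measure_pmf.prob ?coins ?heads_on_J = p ^ card J"
    using assms by (simp add: measure_Pi_pmf_Pi if_distrib[of "measure_pmf.prob _"]
        measure_pmf_single prod.If_cases Int_absorb1 Int_def[symmetric])
  finally show ?thesis .
qed

lemma one_minus_power_mult_one_plus_le_1:
  fixes x :: real
  assumes "0 \<le> x" "x \<le> 1"
  shows "(1 - x) ^ N * (1 + N * x) \<le> 1"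
proof -
  have "(1 - x) ^ N * (1 + N * x) \<le> (1 - x) ^ N * (1 + x) ^ N"
    using Bernoulli_inequality[of x N] assms by (intro mult_left_mono) auto
  also have "\<dots> = (1 - x\<^sup>2) ^ N"
    by (simp add: power_mult_distrib[symmetric] algebra_simps power2_eq_square)
  also have "\<dots> \<le> 1"
    using assms by (intro power_le_one) (auto simp: power_le_one)
  finally show ?thesis .
qed

lemma three_mul_power_le_power:
  fixes n :: nat
  assumes "2 \<le> n"
  shows "3 * (4 * n\<^sup>2) ^ (n - 1) \<le> n ^ (4 * n)"
proof -
  have "4 \<le> n\<^sup>2" and "3 \<le> n ^ 4"
    using power_mono[OF assms, of 2] power_mono[OF assms, of 4] by simp_all
  then have "4 * n\<^sup>2 \<le> n\<^sup>2 * n\<^sup>2"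
    by (intro mult_right_mono) auto
  also have "\<dots> = n ^ 4"
    by (simp flip: power_add)
  finally have "4 * n\<^sup>2 \<le> n ^ 4" .
  then have "3 * (4 * n\<^sup>2) ^ (n - 1) \<le> n ^ 4 * (n ^ 4) ^ (n - 1)"
    using \<open>3 \<le> n ^ 4\<close> by (intro mult_le_mono power_mono) auto
  also have "\<dots> = n ^ (4 * n)"
    using assms by (simp flip: power_mult power_add add: algebra_simps)
  finally show ?thesis .
qed

lemma one_over_four_square_le_1: "1 / (4 * real n ^ 2) \<le> 1"
proof (cases "n = 0")
  case False
  then have "1 \<le> real n ^ 2"
    by (intro one_le_power) simp
  then show ?thesis
    by (simp add: divide_le_eq)
qed simp

lemma prob_Pset_empty:
  assumes "finite U" "0 \<le> p" "p \<le> 1" "t \<le> Suc n"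
  shows "measure_pmf.prob (iid_subsets n U p) {V. Pset U V t = {}} = (1 - p ^ (t - 1)) ^ card U"
  unfolding iid_subsets_def Pset_def
  by (subst prob_random_subsets_Inter_empty) (use assms in auto)

lemma prob_Pset_last_empty_le:
  assumes "3 \<le> n" "finite U" "n ^ (4 * n) \<le> card U"
  shows "measure_pmf.prob (iid_subsets n U (1 / (4 * real n ^ 2))) {V. Pset U V n = {}} \<le> 1 / 4"
proof -
  define \<delta> where "\<delta> = 1 / (4 * real n ^ 2)"
  define x where "x = \<delta> ^ (n - 1)"
  have "0 \<le> \<delta>" "\<delta> \<le> 1"
    using one_over_four_square_le_1[of n] by (simp_all add: \<delta>_def)
  then have x: "0 \<le> x" "x \<le> 1"
    by (auto simp: x_def power_le_one)
  have prob_eq: "measure_pmf.prob (iid_subsets n U \<delta>) {V. Pset U V n = {}} = (1 - x) ^ card U"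
    unfolding x_def using assms(2) \<open>0 \<le> \<delta>\<close> \<open>\<delta> \<le> 1\<close> by (rule prob_Pset_empty) simp
  have "real (3 * (4 * n\<^sup>2) ^ (n - 1)) \<le> card U"
    using three_mul_power_le_power[of n] assms(1,3) by (simp only: of_nat_le_iff) linarith
  then have card_U: "3 * (4 * real n ^ 2) ^ (n - 1) \<le> card U"
    by simp
  have "(4 * real n ^ 2) ^ (n - 1) * x = 1"
    using assms(1) by (simp add: x_def \<delta>_def power_one_over)
  then have "3 = 3 * (4 * real n ^ 2) ^ (n - 1) * x"
    by simp
  also have "\<dots> \<le> card U * x"
    using card_U x(1) by (rule mult_right_mono)
  finally have "3 \<le> card U * x" .
  then have "(1 - x) ^ card U * 4 \<le> (1 - x) ^ card U * (1 + card U * x)"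
    using x by (intro mult_left_mono) auto
  also have "\<dots> \<le> 1"
    using x by (rule one_minus_power_mult_one_plus_le_1)
  finally show ?thesis
    using prob_eq by (simp add: \<delta>_def)
qed

lemma Jelem_in_Pset:
  assumes "bij_betw v {1..card U} U" "Pset U V t \<noteq> {}"
  shows "Jelem U v V t \<in> Pset U V t"
proof -
  obtain u where u: "u \<in> Pset U V t"
    using assms(2) by blast
  then have "u \<in> v ` {1..card U}"
    using assms(1) by (auto simp: bij_betw_def Pset_def)
  then obtain r where r: "r \<in> {1..card U}" "v r = u"
    by blast
  show ?thesis
    unfolding Jelem_def by (rule LeastI2[of _ r]) (use r u in auto)
qed

lemma Jelem_fun_upd:
  assumes "t \<le> i"
  shows "Jelem U v (V(i := Y)) t = Jelem U v V t"
proof -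
  have "Pset U (V(i := Y)) t = Pset U V t"
    using assms by (auto simp: Pset_def)
  then show ?thesis
    by (simp add: Jelem_def)
qed

lemma Jelem_in_Sset:
  assumes "bij_betw v {1..card U} U" "t \<in> {1..n}" "Pset U V n \<noteq> {}"
    and "\<forall>i\<in>{t..n}. Jelem U v V t \<notin> V i"
  shows "Pset U V t \<noteq> {} \<and> Jelem U v V t \<in> Sset U n V t"
proof -
  have "Pset U V n \<subseteq> Pset U V t"
    using assms(2) by (auto simp: Pset_def)
  then have nonempty: "Pset U V t \<noteq> {}"
    using assms(3) by blast
  moreover have "Jelem U v V t \<in> U"
    using Jelem_in_Pset[OF assms(1) nonempty] by (simp add: Pset_def)
  ultimately show ?thesis
    using assms(4) by (auto simp: Sset_def)
qed

lemma prob_Jelem_mem_later_le: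
  assumes "finite U" "0 \<le> p" "p \<le> 1" "t \<le> i" "i \<in> {1..n}"
  shows "measure_pmf.prob (iid_subsets n U p) {V. Jelem U v V t \<in> V i} \<le> p"
  unfolding iid_subsets_def
  by (rule prob_Pi_pmf_component_le[where g = "\<lambda>V. Jelem U v V t" and R = "(\<in>)"])
     (use assms in \<open>auto simp: Jelem_fun_upd prob_random_subset_mem\<close>)

lemma prob_Jelem_mem_some_later_le:
  assumes "finite U" "0 \<le> p" "p \<le> 1"
  shows "measure_pmf.prob (iid_subsets n U p) {V. \<exists>t\<in>{1..n}. \<exists>i\<in>{t..n}. Jelem U v V t \<in> V i}
           \<le> real n ^ 2 * p"
proof -
  let ?M = "iid_subsets n U p"
  let ?T = "SIGMA t:{1..n}. {t..n}"
  have "card ?T \<le> card ({1..n} \<times> {1..n})"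
    by (intro card_mono) auto
  also have "\<dots> = n ^ 2"
    by (simp add: power2_eq_square)
  finally have card_T: "real (card ?T) \<le> real n ^ 2"
    by (simp only: of_nat_le_iff flip: of_nat_power)
  have "{V. \<exists>t\<in>{1..n}. \<exists>i\<in>{t..n}. Jelem U v V t \<in> V i} = (\<Union>(t, i)\<in>?T. {V. Jelem U v V t \<in> V i})"
    by auto
  then have "measure_pmf.prob ?M {V. \<exists>t\<in>{1..n}. \<exists>i\<in>{t..n}. Jelem U v V t \<in> V i}
               \<le> (\<Sum>(t, i)\<in>?T. measure_pmf.prob ?M {V. Jelem U v V t \<in> V i})"
    by (auto intro!: measure_pmf.finite_measure_subadditive_finite simp: case_prod_unfold)
  also have "\<dots> \<le> (\<Sum>_\<in>?T. p)"
    using assms by (intro sum_mono) (auto intro: prob_Jelem_mem_later_le)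
  also have "\<dots> = real (card ?T) * p"
    by (rule sum_constant)
  also have "\<dots> \<le> real n ^ 2 * p"
    using card_T \<open>0 \<le> p\<close> by (rule mult_right_mono)
  finally show ?thesis .
qed

theorem mainTheorem7:
  fixes n :: nat and U :: "'a set" and v :: "nat \<Rightarrow> 'a"
  assumes "n \<ge> 3"
    and "finite U"
    and "card U \<ge> n ^ (4 * n)"
    and "bij_betw v {1..card U} U"
  shows "measure_pmf.prob (iid_subsets n U (1 / (4 * real n ^ 2)))
           {V. \<forall>t\<in>{1..n}. Pset U V t \<noteq> {} \<and> Jelem U v V t \<in> Sset U n V t}
         \<ge> 1 / 2"
proof -
  let ?\<delta> = "1 / (4 * real n ^ 2)"
  let ?M = "iid_subsets n U ?\<delta>"
  let ?good = "{V. \<forall>t\<in>{1..n}. Pset U V t \<noteq> {} \<and> Jelem U v V t \<in> Sset U n V t}"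
  let ?empty = "{V. Pset U V n = {}}"
  let ?collision = "{V. \<exists>t\<in>{1..n}. \<exists>i\<in>{t..n}. Jelem U v V t \<in> V i}"
  have "- ?good \<subseteq> ?empty \<union> ?collision"
    using Jelem_in_Sset[OF assms(4)] by blast
  then have "measure_pmf.prob ?M (- ?good) \<le> measure_pmf.prob ?M (?empty \<union> ?collision)"
    by (intro measure_pmf.finite_measure_mono) auto
  also have "\<dots> \<le> measure_pmf.prob ?M ?empty + measure_pmf.prob ?M ?collision"
    by (rule measure_Un_le) auto
  also have "\<dots> \<le> 1 / 4 + real n ^ 2 * ?\<delta>"
    using assms one_over_four_square_le_1[of n]
    by (intro add_mono prob_Pset_last_empty_le prob_Jelem_mem_some_later_le) auto
  also have "\<dots> = 1 / 2"
    using assms(1) by simp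
  finally show ?thesis
    using measure_pmf.prob_compl[of ?good ?M] by (simp add: Compl_eq_Diff_UNIV)
qed

end
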